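(* Let $T$ be a rooted tree whose leaves are the keys $[n]=\{1,\dots,n\}$, and for each node $v$ of $T$ let $R_v$ be the set of leaves in the subtree of $v$. Let $p=(p_1,\dots,p_n)\in[0,1]^n$ with $\sum_i p_i$ an integer. Let $S$ be the random output of the hierarchy summarization procedure applied to $T$ and $p$. Then the distribution of $S$ is VarOpt for $p$, and for every node $v$ of $T$, with probability one, $|S\cap R_v|\in\{\lfloor p(R_v)\rfloor,\lceil p(R_v)\rceil\}$, where $p(R)=\sum_{i\in R}p_i$. In particular the maximum range discrepancy over the ranges $\{R_v\}$ is less than $1$.
   Context: Pair-Aggregate$(p,i,j)$, for indices $i\ne j$ with $0<p_i,p_j<1$, modifies only entries $i,j$ of the current vector $p$: if $p_i+p_j<1$, then with probability $p_i/(p_i+p_j)$ set $(p_i,p_j)\leftarrow(p_i+p_j,0)$ and otherwise set $(p_i,p_j)\leftarrow(0,p_i+p_j)$; if $p_i+p_j\ge 1$, then with probability $(1-p_j)/(2-p_i-p_j)$ set $(p_i,p_j)\leftarrow(1,p_i+p_j-1)$ and otherwise set $(p_i,p_j)\leftarrow(p_i+p_j-1,1)$ (independent fresh randomness each call). The hierarchy summarization procedure: starting from the vector $p$, as long as there are at least two indices whose current value lies in $(0,1)$, choose a pair $i\ne j$ of such indices whose lowest common ancestor $\mathrm{LCA}(i,j)$ in $T$ is lowest, i.e. there is no other pair of indices with current values in $(0,1)$ whose LCA is a proper descendant of $\mathrm{LCA}(i,j)$ (ties broken arbitrarily), and apply Pair-Aggregate to it; at termination output $S=\{i: p_i=1\}$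 for the final vector. A distribution over subsets $S\subseteq[n]$ is VarOpt for $p$ if $\Pr[i\in S]=p_i$ for all $i$, $|S|=\sum_ip_i$ with probability one, and for every $J\subseteq[n]$, $\Pr[J\subseteq S]\le\prod_{i\in J}p_i$ and $\Pr[J\cap S=\emptyset]\le\prod_{i\in J}(1-p_i)$. The maximum range discrepancy over a family of ranges $\mathcal{R}$ is $\max_{S}\max_{R\in\mathcal{R}}\big||S\cap R|-p(R)\big|$ over $S$ in the support. *)

theory Defs
  imports "HOL-Probability.Probability"
begin

definition is_anc :: "('v \<Rightarrow> 'v) \<Rightarrow> 'v \<Rightarrow> 'v \<Rightarrow> bool" where
  "is_anc par u v \<longleftrightarrow> (\<exists>k. (par ^^ k) v = u)"

definition rooted_tree :: "'v set \<Rightarrow> 'v \<Rightarrow> ('v \<Rightarrow> 'v) \<Rightarrow> bool" where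
  "rooted_tree V r par \<longleftrightarrow> finite V \<and> r \<in> V \<and> par r = r \<and>
     (\<forall>v\<in>V. v \<noteq> r \<longrightarrow> par v \<in> V \<and> par v \<noteq> v) \<and>
     (\<forall>v\<in>V. is_anc par r v)"

definition tree_leaves :: "'v set \<Rightarrow> 'v \<Rightarrow> ('v \<Rightarrow> 'v) \<Rightarrow> 'v set" where
  "tree_leaves V r par = {v\<in>V. \<not> (\<exists>w\<in>V. w \<noteq> r \<and> par w = v)}"

text \<open>R_v: the keys whose leaf lies in the subtree of v (leaf of key i is lf i).\<close>
definition subtree_keys :: "('v \<Rightarrow> 'v) \<Rightarrow> (nat \<Rightarrow> 'v) \<Rightarrow> nat \<Rightarrow> 'v \<Rightarrow> nat set" where
  "subtree_keys par lf n v = {i\<in>{1..n}. is_anc par v (lf i)}"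

definition lca :: "'v set \<Rightarrow> ('v \<Rightarrow> 'v) \<Rightarrow> (nat \<Rightarrow> 'v) \<Rightarrow> nat \<Rightarrow> nat \<Rightarrow> 'v" where
  "lca V par lf i j = (THE w. w \<in> V \<and> is_anc par w (lf i) \<and> is_anc par w (lf j) \<and>
      (\<forall>u\<in>V. is_anc par u (lf i) \<and> is_anc par u (lf j) \<longrightarrow> is_anc par u w))"

definition proper_desc :: "('v \<Rightarrow> 'v) \<Rightarrow> 'v \<Rightarrow> 'v \<Rightarrow> bool" where
  "proper_desc par u w \<longleftrightarrow> is_anc par w u \<and> u \<noteq> w"

definition frac :: "nat \<Rightarrow> (nat \<Rightarrow> real) \<Rightarrow> nat set" where
  "frac n q = {i\<in>{1..n}. 0 < q i \<and> q i < 1}"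

definition pair_aggregate :: "(nat \<Rightarrow> real) \<Rightarrow> nat \<Rightarrow> nat \<Rightarrow> (nat \<Rightarrow> real) pmf" where
  "pair_aggregate q i j =
     (if q i + q j < 1 then
        map_pmf (\<lambda>b. if b then q(i := q i + q j, j := 0) else q(i := 0, j := q i + q j))
                (bernoulli_pmf (q i / (q i + q j)))
      else
        map_pmf (\<lambda>b. if b then q(i := 1, j := q i + q j - 1) else q(i := q i + q j - 1, j := 1))
                (bernoulli_pmf ((1 - q j) / (2 - q i - q j))))"

text \<open>A tie-breaking rule: for each current vector with at least two fractional
  entries it picks a pair of distinct fractional indices whose LCA is lowest.\<close>
definition valid_choice :: "'v set \<Rightarrow> ('v \<Rightarrow> 'v) \<Rightarrow> (nat \<Rightarrow> 'v) \<Rightarrow> nat \<Rightarrow>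
    ((nat \<Rightarrow> real) \<Rightarrow> nat \<times> nat) \<Rightarrow> bool" where
  "valid_choice V par lf n ch \<longleftrightarrow>
     (\<forall>q. card (frac n q) \<ge> 2 \<longrightarrow>
        (let i = fst (ch q); j = snd (ch q) in
          i \<in> frac n q \<and> j \<in> frac n q \<and> i \<noteq> j \<and>
          \<not> (\<exists>k\<in>frac n q. \<exists>l\<in>frac n q. k \<noteq> l \<and>
                 proper_desc par (lca V par lf k l) (lca V par lf i j))))"

text \<open>Run the loop with a fuel bound; each Pair-Aggregate makes at least one
  fractional entry integral, so fuel n suffices for termination.\<close>
primrec hs_run :: "((nat \<Rightarrow> real) \<Rightarrow> nat \<times> nat) \<Rightarrow> nat \<Rightarrow> nat \<Rightarrow> (nat \<Rightarrow> real)
    \<Rightarrow> (nat \<Rightarrow> real) pmf" where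
  "hs_run ch n 0 q = return_pmf q"
| "hs_run ch n (Suc k) q =
     (if card (frac n q) < 2 then return_pmf q
      else bind_pmf (pair_aggregate q (fst (ch q)) (snd (ch q))) (hs_run ch n k))"

definition hier_summarize :: "((nat \<Rightarrow> real) \<Rightarrow> nat \<times> nat) \<Rightarrow> nat \<Rightarrow> (nat \<Rightarrow> real)
    \<Rightarrow> nat set pmf" where
  "hier_summarize ch n p = map_pmf (\<lambda>q. {i\<in>{1..n}. q i = 1}) (hs_run ch n n p)"

definition varopt :: "nat \<Rightarrow> (nat \<Rightarrow> real) \<Rightarrow> nat set pmf \<Rightarrow> bool" where
  "varopt n p D \<longleftrightarrow>
     (\<forall>i\<in>{1..n}. measure_pmf.prob D {S. i \<in> S} = p i) \<and>
     (\<forall>S\<in>set_pmf D. real (card S) = (\<Sum>i\<in>{1..n}. p i)) \<and>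
     (\<forall>J. J \<subseteq> {1..n} \<longrightarrow>
        measure_pmf.prob D {S. J \<subseteq> S} \<le> (\<Prod>i\<in>J. p i) \<and>
        measure_pmf.prob D {S. J \<inter> S = {}} \<le> (\<Prod>i\<in>J. 1 - p i))"

end

theory Submission
  imports Defs
begin

text \<open>Every Pair-Aggregate step preserves the total mass, makes at least one entry integral and is
  negatively correlated: for any fixed set of keys J, the expected product of the entries over J,
  and the expected product of their complements, do not increase. Once the vector is integral these
  products are the indicators of the events J \<subseteq> S and J \<inter> S = {}, which gives the VarOpt
  inequalities; the marginals follow from J = {i}.
  For a node v, the partial sum over R_v stays between the floor and the ceiling of p(R_v): it only
  changes when the aggregated pair is split by R_v, and then the lowest-LCA rule guarantees that
  R_v holds no other fractional entry, so the sum is an integer plus one fraction, and that fraction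
  is replaced by a value in [0, 1].\<close>

section \<open>Ancestors and lowest common ancestors\<close>

lemma is_anc_trans: "is_anc par a b \<Longrightarrow> is_anc par b c \<Longrightarrow> is_anc par a c"
  unfolding is_anc_def by (metis funpow_add comp_apply)

lemma is_anc_funpow_mono: "s \<le> t \<Longrightarrow> is_anc par ((par ^^ t) x) ((par ^^ s) x)"
  unfolding is_anc_def by (metis funpow_add comp_apply le_add_diff_inverse2)

lemma is_anc_linear:
  assumes "is_anc par a x" "is_anc par b x"
  shows "is_anc par a b \<or> is_anc par b a"
proof -
  obtain s t where "(par ^^ s) x = a" "(par ^^ t) x = b"
    using assms unfolding is_anc_def by blast
  then show ?thesis
    using is_anc_funpow_mono[of s t par x] is_anc_funpow_mono[of t s par x] by (metis nat_le_linear)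
qed

lemma rooted_tree_funpow_root: "rooted_tree V r par \<Longrightarrow> (par ^^ k) r = r"
  by (induction k) (auto simp: rooted_tree_def)

lemma is_anc_antisym:
  assumes tree: "rooted_tree V r par" and "b \<in> V"
    and ab: "is_anc par a b" and ba: "is_anc par b a"
  shows "a = b"
proof -
  obtain s where s: "(par ^^ s) b = a" using ab unfolding is_anc_def by blast
  obtain t where t: "(par ^^ t) a = b" using ba unfolding is_anc_def by blast
  obtain c where c: "(par ^^ c) b = r"
    using tree \<open>b \<in> V\<close> unfolding rooted_tree_def is_anc_def by blast
  have cycle: "(par ^^ (m * (t + s))) b = b" for m
    by (induction m) (simp_all add: funpow_add s t)
  show ?thesis
  proof (cases "t + s = 0")
    case True
    then show ?thesis using s by simp
  next
    case False
    then have "c \<le> c * (t + s)" by (simp add: Suc_le_eq)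
    then have "b = (par ^^ (c * (t + s) - c)) ((par ^^ c) b)"
      by (metis cycle comp_apply funpow_add le_add_diff_inverse2)
    then have "b = r" using c rooted_tree_funpow_root[OF tree] by simp
    then show ?thesis using s rooted_tree_funpow_root[OF tree] by simp
  qed
qed

lemma rooted_tree_funpow_closed: "rooted_tree V r par \<Longrightarrow> v \<in> V \<Longrightarrow> (par ^^ k) v \<in> V"
  by (induction k) (auto simp: rooted_tree_def)

text \<open>The LCA is the first ancestor of lf i, going upwards, that is also an ancestor of lf j.\<close>
lemma lca_spec:
  assumes tree: "rooted_tree V r par" and x: "lf i \<in> V" and y: "lf j \<in> V"
  shows "is_anc par (lca V par lf i j) (lf i)" "is_anc par (lca V par lf i j) (lf j)"
    and "\<And>u. u \<in> V \<Longrightarrow> is_anc par u (lf i) \<Longrightarrow> is_anc par u (lf j) \<Longrightarrow>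
      is_anc par u (lca V par lf i j)"
proof -
  define P where "P w \<longleftrightarrow> w \<in> V \<and> is_anc par w (lf i) \<and> is_anc par w (lf j) \<and>
      (\<forall>u\<in>V. is_anc par u (lf i) \<and> is_anc par u (lf j) \<longrightarrow> is_anc par u w)" for w
  obtain s0 where "(par ^^ s0) (lf i) = r"
    using tree x unfolding rooted_tree_def is_anc_def by blast
  moreover have "is_anc par r (lf j)" using tree y unfolding rooted_tree_def by blast
  ultimately have ex: "\<exists>s. is_anc par ((par ^^ s) (lf i)) (lf j)" by metis
  define s where "s = (LEAST s. is_anc par ((par ^^ s) (lf i)) (lf j))"
  define w where "w = (par ^^ s) (lf i)"
  have "P w" unfolding P_def
  proof (intro conjI ballI impI)
    show "w \<in> V" unfolding w_def using rooted_tree_funpow_closed[OF tree x] .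
    show "is_anc par w (lf i)" unfolding is_anc_def w_def by blast
    show "is_anc par w (lf j)" unfolding w_def s_def using ex by (rule LeastI_ex)
    fix u assume "is_anc par u (lf i) \<and> is_anc par u (lf j)"
    then obtain t where t: "(par ^^ t) (lf i) = u" "is_anc par u (lf j)"
      unfolding is_anc_def by blast
    then have "s \<le> t" unfolding s_def by (metis Least_le)
    then show "is_anc par u w" unfolding w_def using is_anc_funpow_mono t(1) by metis
  qed
  moreover have "w' = w" if "P w'" for w'
    using that \<open>P w\<close> is_anc_antisym[OF tree] unfolding P_def by blast
  ultimately have "P (lca V par lf i j)"
    unfolding lca_def P_def[symmetric] by (rule theI)
  then show "is_anc par (lca V par lf i j) (lf i)" "is_anc par (lca V par lf i j) (lf j)"
    and "\<And>u. u \<in> V \<Longrightarrow> is_anc par u (lf i) \<Longrightarrow> is_anc par u (lf j) \<Longrightarrow>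
      is_anc par u (lca V par lf i j)"
    unfolding P_def by blast+
qed

definition in_unit_cube :: "nat \<Rightarrow> (nat \<Rightarrow> real) \<Rightarrow> bool" where
  "in_unit_cube n q \<longleftrightarrow> (\<forall>k\<in>{1..n}. 0 \<le> q k \<and> q k \<le> 1)"

lemma in_unit_cube_not_frac:
  "in_unit_cube n q \<Longrightarrow> k \<in> {1..n} \<Longrightarrow> k \<notin> frac n q \<Longrightarrow> q k = 0 \<or> q k = 1"
  unfolding in_unit_cube_def frac_def by fastforce

lemma sum_01_eq_card:
  assumes "finite A" "\<forall>k\<in>A. q k = 0 \<or> q k = 1"
  shows "sum q A = real (card {k\<in>A. q k = 1})"
proof -
  have "sum q A = (\<Sum>k\<in>A. if q k = 1 then 1 else 0)"
    by (rule sum.cong) (use assms in auto)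
  also have "\<dots> = real (card {k\<in>A. q k = 1})"
    using assms(1) by (simp add: sum.If_cases Int_def)
  finally show ?thesis .
qed

lemma sum_in_Ints_no_frac:
  assumes "in_unit_cube n q" "A \<subseteq> {1..n}" "A \<inter> frac n q = {}"
  shows "sum q A \<in> \<int>"
proof -
  have "\<forall>k\<in>A. q k = 0 \<or> q k = 1" using assms in_unit_cube_not_frac by blast
  then have "sum q A = real (card {k\<in>A. q k = 1})"
    using assms(2) finite_subset by (blast intro: sum_01_eq_card)
  then show ?thesis by simp
qed

lemma sum_fun_upd2:
  fixes q :: "nat \<Rightarrow> real"
  assumes "finite A" "i \<noteq> j"
  shows "(\<Sum>k\<in>A. (q(i := a, j := b)) k) =
    (\<Sum>k\<in>A. q k) + (if i \<in> A then a - q i else 0) + (if j \<in> A then b - q j else 0)"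
proof -
  have "(\<Sum>k\<in>A. (q(i := a, j := b)) k) =
      (\<Sum>k\<in>A. q k + (if k = i then a - q i else 0) + (if k = j then b - q j else 0))"
    by (rule sum.cong) (use assms(2) in auto)
  then show ?thesis
    unfolding sum.distrib using assms(1) by (simp add: sum.delta)
qed

lemma prod_fun_upd2:
  assumes "finite J" "i \<noteq> j"
  shows "(\<Prod>k\<in>J. h ((q(i := a, j := b)) k)) =
    (\<Prod>k\<in>J - {i, j}. h (q k)) * (if i \<in> J then h a else 1) * (if j \<in> J then h b else 1)"
proof -
  have "(\<Prod>k\<in>J. h ((q(i := a, j := b)) k)) =
      (\<Prod>k\<in>J - {i, j}. h ((q(i := a, j := b)) k)) * (\<Prod>k\<in>J \<inter> {i, j}. h ((q(i := a, j := b)) k))"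
    using prod.subset_diff[of "J \<inter> {i, j}" J "\<lambda>k. h ((q(i := a, j := b)) k)"] assms(1)
    by (simp add: Diff_Int del: fun_upd_apply)
  also have "(\<Prod>k\<in>J - {i, j}. h ((q(i := a, j := b)) k)) = (\<Prod>k\<in>J - {i, j}. h (q k))"
    by (rule prod.cong) auto
  also have "(\<Prod>k\<in>J \<inter> {i, j}. h ((q(i := a, j := b)) k)) =
      (if i \<in> J then h a else 1) * (if j \<in> J then h b else 1)"
    using assms(2) by (cases "i \<in> J"; cases "j \<in> J") (auto simp: Int_insert_right)
  finally show ?thesis by (simp only: mult.assoc)
qed

definition in_rounding_interval :: "real \<Rightarrow> real \<Rightarrow> bool" where
  "in_rounding_interval P x \<longleftrightarrow> of_int \<lfloor>P\<rfloor> \<le> x \<and> x \<le> of_int \<lceil>P\<rceil>"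

lemma in_rounding_interval_self: "in_rounding_interval P P"
  unfolding in_rounding_interval_def by linarith

text \<open>An integer plus a proper fraction can only lie between floor and ceiling of P if P is
  not an integer; then the fraction may be replaced by any number in [0, 1].\<close>
lemma in_rounding_interval_replace_frac:
  assumes "z \<in> \<int>" "0 < y" "y < 1" "in_rounding_interval P (z + y)" "0 \<le> t" "t \<le> 1"
  shows "in_rounding_interval P (z + t)"
proof -
  obtain m where m: "z = of_int m" using assms(1) Ints_cases by blast
  have "\<lfloor>P\<rfloor> \<le> m" "m + 1 \<le> \<lceil>P\<rceil>"
    using assms(2-4) unfolding in_rounding_interval_def m by linarith+
  then show ?thesis using assms(5,6) unfolding in_rounding_interval_def m by linarith
qed

lemma in_rounding_interval_nat:
  assumes "in_rounding_interval P (real c)"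
  shows "(int c = \<lfloor>P\<rfloor> \<or> int c = \<lceil>P\<rceil>) \<and> \<bar>real c - P\<bar> < 1"
proof -
  have "\<lfloor>P\<rfloor> \<le> int c" "int c \<le> \<lceil>P\<rceil>"
    using assms unfolding in_rounding_interval_def by linarith+
  moreover have "\<lceil>P\<rceil> \<le> \<lfloor>P\<rfloor> + 1" by linarith
  ultimately have "int c = \<lfloor>P\<rfloor> \<or> int c = \<lceil>P\<rceil>" by linarith
  moreover have "\<bar>real_of_int \<lfloor>P\<rfloor> - P\<bar> < 1" "\<bar>real_of_int \<lceil>P\<rceil> - P\<bar> < 1" by linarith+
  ultimately show ?thesis by (metis of_int_of_nat_eq)
qed

section \<open>Pair-Aggregate\<close>

lemma pair_aggregate_outcome:
  assumes "0 < q i" "q i < 1" "0 < q j" "q j < 1"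
    and "q' \<in> set_pmf (pair_aggregate q i j)"
  obtains a b where "q' = q(i := a, j := b)" "a + b = q i + q j"
    "0 \<le> a" "a \<le> 1" "0 \<le> b" "b \<le> 1" "a \<in> {0, 1} \<or> b \<in> {0, 1}"
proof (cases "q i + q j < 1")
  case True
  then show ?thesis using assms that[of "q i + q j" 0] that[of 0 "q i + q j"]
    unfolding pair_aggregate_def by (auto split: if_splits)
next
  case False
  then show ?thesis using assms that[of 1 "q i + q j - 1"] that[of "q i + q j - 1" 1]
    unfolding pair_aggregate_def by (auto split: if_splits)
qed

lemma finite_set_pmf_pair_aggregate: "finite (set_pmf (pair_aggregate q i j))"
  unfolding pair_aggregate_def by auto

text \<open>For a key with current value x, lit_prob True x and lit_prob False x are the
  probabilities x and 1 - x that it ends up inside, resp. outside, the sample.\<close>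
definition lit_prob :: "bool \<Rightarrow> real \<Rightarrow> real" where
  "lit_prob b x = (if b then x else 1 - x)"

lemma lit_prob_nonneg: "0 \<le> x \<Longrightarrow> x \<le> 1 \<Longrightarrow> 0 \<le> lit_prob b x"
  by (simp add: lit_prob_def)

lemma merge_below_one_le:
  fixes u w :: real
  assumes "0 < u" "0 < w" "u + w < 1"
    and A: "A \<in> {\<lambda>_. 1, lit_prob b}" and B: "B \<in> {\<lambda>_. 1, lit_prob b}"
  defines "x \<equiv> u / (u + w)"
  shows "A (u + w) * B 0 * x + A 0 * B (u + w) * (1 - x) \<le> A u * B w"
proof -
  have "x * (u + w) = u" using assms(1,2) unfolding x_def by simp
  moreover have "0 \<le> u * w" using assms(1,2) by simp
  ultimately show ?thesis using A B by (auto simp: lit_prob_def algebra_simps)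
qed

lemma merge_above_one_le:
  fixes u w :: real
  assumes "u < 1" "w < 1" "1 \<le> u + w"
    and A: "A \<in> {\<lambda>_. 1, lit_prob b}" and B: "B \<in> {\<lambda>_. 1, lit_prob b}"
  defines "y \<equiv> (1 - w) / (2 - u - w)"
  shows "A 1 * B (u + w - 1) * y + A (u + w - 1) * B 1 * (1 - y) \<le> A u * B w"
proof -
  have "y * (2 - u - w) = 1 - w" using assms(1,2) unfolding y_def by simp
  moreover have "0 \<le> (1 - u) * (1 - w)" using assms(1,2) by simp
  ultimately show ?thesis using A B assms(1-3) by (auto simp: lit_prob_def algebra_simps)
qed

lemma pair_aggregate_expectation_le:
  fixes q :: "nat \<Rightarrow> real"
  assumes "i \<noteq> j" "0 < q i" "q i < 1" "0 < q j" "q j < 1"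
    and "finite J" "\<forall>k\<in>J. 0 \<le> q k \<and> q k \<le> 1"
  shows "measure_pmf.expectation (pair_aggregate q i j) (\<lambda>q'. \<Prod>k\<in>J. lit_prob b (q' k))
    \<le> (\<Prod>k\<in>J. lit_prob b (q k))"
proof -
  define u w where "u = q i" and "w = q j"
  define C where "C = (\<Prod>k\<in>J - {i, j}. lit_prob b (q k))"
  define A where "A = (if i \<in> J then lit_prob b else (\<lambda>_. 1))"
  define B where "B = (if j \<in> J then lit_prob b else (\<lambda>_. 1))"
  have F: "(\<Prod>k\<in>J. lit_prob b ((q(i := x, j := y)) k)) = C * A x * B y" for x y
    unfolding C_def A_def B_def prod_fun_upd2[OF assms(6,1)] by simp
  have "C \<ge> 0" unfolding C_def using assms(7) by (auto intro: prod_nonneg lit_prob_nonneg)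
  have AB: "A \<in> {\<lambda>_. 1, lit_prob b}" "B \<in> {\<lambda>_. 1, lit_prob b}"
    unfolding A_def B_def by auto
  have "(\<Prod>k\<in>J. lit_prob b (q k)) = C * A u * B w"
    using F[of u w] unfolding u_def w_def by simp
  moreover have "measure_pmf.expectation (pair_aggregate q i j) (\<lambda>q'. \<Prod>k\<in>J. lit_prob b (q' k))
    \<le> C * (A u * B w)"
  proof (cases "u + w < 1")
    case True
    define x where "x = u / (u + w)"
    have "0 \<le> x" "x \<le> 1" unfolding x_def using assms(2,4) True by (auto simp: u_def w_def)
    then have "measure_pmf.expectation (pair_aggregate q i j) (\<lambda>q'. \<Prod>k\<in>J. lit_prob b (q' k))
        = C * (A (u + w) * B 0 * x + A 0 * B (u + w) * (1 - x))"
      using True unfolding pair_aggregate_def x_def u_def w_def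
      by (simp add: F algebra_simps del: fun_upd_apply)
    also have "\<dots> \<le> C * (A u * B w)"
      using merge_below_one_le[OF _ _ True AB] assms(2,4) \<open>C \<ge> 0\<close>
      unfolding x_def u_def w_def by (simp add: mult_left_mono)
    finally show ?thesis .
  next
    case False
    define y where "y = (1 - w) / (2 - u - w)"
    have "0 \<le> y" "y \<le> 1" unfolding y_def using assms(3,5) False by (auto simp: u_def w_def)
    then have "measure_pmf.expectation (pair_aggregate q i j) (\<lambda>q'. \<Prod>k\<in>J. lit_prob b (q' k))
        = C * (A 1 * B (u + w - 1) * y + A (u + w - 1) * B 1 * (1 - y))"
      using False unfolding pair_aggregate_def y_def u_def w_def
      by (simp add: F algebra_simps del: fun_upd_apply)
    also have "\<dots> \<le> C * (A u * B w)"
      using merge_above_one_le[OF _ _ _ AB] assms(3,5) False \<open>C \<ge> 0\<close>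
      unfolding y_def u_def w_def by (simp add: mult_left_mono)
    finally show ?thesis .
  qed
  ultimately show ?thesis by (simp add: mult.assoc)
qed

lemma prod_lit_prob_01:
  assumes "finite J" "\<forall>k\<in>J. q k = 0 \<or> q k = 1"
  shows "(\<Prod>k\<in>J. lit_prob b (q k)) = (if \<forall>k\<in>J. (q k = 1) = b then 1 else 0)"
proof (cases "\<forall>k\<in>J. (q k = 1) = b")
  case True
  then show ?thesis using assms(2) by (auto simp: lit_prob_def intro!: prod.neutral)
next
  case False
  then obtain k where "k \<in> J" "(q k = 1) \<noteq> b" by blast
  then have "lit_prob b (q k) = 0" using assms(2) by (cases b) (auto simp: lit_prob_def)
  then show ?thesis using \<open>k \<in> J\<close> False assms(1) by (auto intro: prod_zero)
qed

section \<open>Runs of the procedure\<close>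

lemma finite_set_pmf_hs_run: "finite (set_pmf (hs_run ch n k q))"
  by (induction k arbitrary: q) (auto simp: set_bind_pmf finite_set_pmf_pair_aggregate)

lemma hs_run_invariant:
  assumes step: "\<And>q q'. P q \<Longrightarrow> 2 \<le> card (frac n q) \<Longrightarrow>
      q' \<in> set_pmf (pair_aggregate q (fst (ch q)) (snd (ch q))) \<Longrightarrow> P q'"
  shows "P q \<Longrightarrow> q' \<in> set_pmf (hs_run ch n k q) \<Longrightarrow> P q'"
proof (induction k arbitrary: q)
  case (Suc k)
  then show ?case using step by (fastforce simp: set_bind_pmf not_less split: if_splits)
qed simp

lemma hs_run_expectation_le:
  fixes F :: "(nat \<Rightarrow> real) \<Rightarrow> real"
  assumes step: "\<And>q q'. P q \<Longrightarrow> 2 \<le> card (frac n q) \<Longrightarrow>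
      q' \<in> set_pmf (pair_aggregate q (fst (ch q)) (snd (ch q))) \<Longrightarrow> P q'"
    and step_le: "\<And>q. P q \<Longrightarrow> 2 \<le> card (frac n q) \<Longrightarrow>
      measure_pmf.expectation (pair_aggregate q (fst (ch q)) (snd (ch q))) F \<le> F q"
  shows "P q \<Longrightarrow> measure_pmf.expectation (hs_run ch n k q) F \<le> F q"
proof (induction k arbitrary: q)
  case (Suc k)
  show ?case
  proof (cases "card (frac n q) < 2")
    case False
    define M where "M = pair_aggregate q (fst (ch q)) (snd (ch q))"
    have fin: "finite (set_pmf M)" unfolding M_def by (rule finite_set_pmf_pair_aggregate)
    have "measure_pmf.expectation (hs_run ch n (Suc k) q) F
        = (\<Sum>a\<in>set_pmf M. pmf M a * measure_pmf.expectation (hs_run ch n k a) F)"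
      using False fin by (simp add: M_def pmf_expectation_bind finite_set_pmf_hs_run)
    also have "\<dots> \<le> (\<Sum>a\<in>set_pmf M. pmf M a * F a)"
      using Suc step False unfolding M_def by (intro sum_mono mult_left_mono) auto
    also have "\<dots> = measure_pmf.expectation M F"
      using fin by (subst integral_measure_pmf_real[of "set_pmf M"]) (auto simp: mult.commute)
    also have "\<dots> \<le> F q" using step_le Suc.prems False unfolding M_def by simp
    finally show ?thesis .
  qed simp
qed simp

section \<open>The lowest-LCA rule\<close>

locale hier_summary =
  fixes V :: "'v set" and r :: 'v and par :: "'v \<Rightarrow> 'v" and n :: nat
    and lf :: "nat \<Rightarrow> 'v" and ch :: "(nat \<Rightarrow> real) \<Rightarrow> nat \<times> nat"
  assumes tree: "rooted_tree V r par"
    and leaf_in_tree: "\<And>i. i \<in> {1..n} \<Longrightarrow> lf i \<in> V"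
    and choice: "valid_choice V par lf n ch"
begin

abbreviation subtree :: "'v \<Rightarrow> nat set" where
  "subtree v \<equiv> subtree_keys par lf n v"

abbreviation aggregate_step :: "(nat \<Rightarrow> real) \<Rightarrow> (nat \<Rightarrow> real) pmf" where
  "aggregate_step q \<equiv> pair_aggregate q (fst (ch q)) (snd (ch q))"

lemma chosen_pair:
  assumes "2 \<le> card (frac n q)"
  shows "fst (ch q) \<in> frac n q" "snd (ch q) \<in> frac n q" "fst (ch q) \<noteq> snd (ch q)"
    and "\<And>k l. k \<in> frac n q \<Longrightarrow> l \<in> frac n q \<Longrightarrow> k \<noteq> l \<Longrightarrow>
      \<not> proper_desc par (lca V par lf k l) (lca V par lf (fst (ch q)) (snd (ch q)))"
  using choice assms unfolding valid_choice_def Let_def by blast+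

text \<open>If the chosen pair is split by a subtree, that subtree holds no other fractional key:
  two fractional keys in it would have an LCA strictly below the LCA of the chosen pair.\<close>
lemma crossing_pair_isolated:
  assumes c2: "2 \<le> card (frac n q)" and v: "v \<in> V"
    and ij: "{i, j} = {fst (ch q), snd (ch q)}" and i: "i \<in> subtree v" and j: "j \<notin> subtree v"
  shows "frac n q \<inter> subtree v = {i}"
proof -
  define w where "w = lca V par lf (fst (ch q)) (snd (ch q))"
  have "i \<in> {fst (ch q), snd (ch q)}" "j \<in> {fst (ch q), snd (ch q)}" using ij by blast+
  then have ij_frac: "i \<in> frac n q" "j \<in> frac n q" using chosen_pair(1,2)[OF c2] by blast+
  then have ij_keys: "i \<in> {1..n}" "j \<in> {1..n}" unfolding frac_def by auto
  have "fst (ch q) \<in> {1..n}" "snd (ch q) \<in> {1..n}"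
    using chosen_pair(1,2)[OF c2] unfolding frac_def by blast+
  then have "is_anc par w (lf (fst (ch q)))" "is_anc par w (lf (snd (ch q)))"
    unfolding w_def by (simp_all add: lca_spec(1,2)[OF tree] leaf_in_tree)
  then have w_anc: "is_anc par w (lf i)" "is_anc par w (lf j)"
    using \<open>i \<in> {fst (ch q), snd (ch q)}\<close> \<open>j \<in> {fst (ch q), snd (ch q)}\<close> by blast+
  have v_i: "is_anc par v (lf i)" using i unfolding subtree_keys_def by blast
  have not_v_w: "\<not> is_anc par v w"
    using is_anc_trans[OF _ w_anc(2)] j ij_keys unfolding subtree_keys_def by blast
  then have w_v: "is_anc par w v" using is_anc_linear[OF v_i w_anc(1)] by blast
  have "k = i" if k: "k \<in> frac n q \<inter> subtree v" for k
  proof (rule ccontr)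
    assume "k \<noteq> i"
    have k_keys: "k \<in> {1..n}" using k unfolding frac_def by blast
    define u where "u = lca V par lf k i"
    have "is_anc par v u"
      using lca_spec(3)[OF tree leaf_in_tree[OF k_keys] leaf_in_tree[OF ij_keys(1)] v] k v_i
      unfolding u_def subtree_keys_def by blast
    then have "proper_desc par u w"
      using is_anc_trans[OF w_v] not_v_w unfolding proper_desc_def by blast
    then show False
      using chosen_pair(4)[OF c2 _ ij_frac(1) \<open>k \<noteq> i\<close>] k unfolding u_def w_def by blast
  qed
  then show ?thesis using i ij_frac by blast
qed

lemma aggregate_step_outcome:
  assumes "2 \<le> card (frac n q)" "q' \<in> set_pmf (aggregate_step q)"
  obtains a b where "q' = q(fst (ch q) := a, snd (ch q) := b)"
    "a + b = q (fst (ch q)) + q (snd (ch q))" "0 \<le> a" "a \<le> 1" "0 \<le> b" "b \<le> 1"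
    "a \<in> {0, 1} \<or> b \<in> {0, 1}"
  using pair_aggregate_outcome chosen_pair(1,2)[OF assms(1)] assms(2) unfolding frac_def by blast

lemma aggregate_step_in_unit_cube:
  assumes "in_unit_cube n q" "2 \<le> card (frac n q)" "q' \<in> set_pmf (aggregate_step q)"
  shows "in_unit_cube n q'"
proof -
  obtain a b where "q' = q(fst (ch q) := a, snd (ch q) := b)" "0 \<le> a" "a \<le> 1" "0 \<le> b" "b \<le> 1"
    using aggregate_step_outcome[OF assms(2,3)] by metis
  then show ?thesis using assms(1) unfolding in_unit_cube_def by auto
qed

lemma aggregate_step_sum:
  assumes "2 \<le> card (frac n q)" "q' \<in> set_pmf (aggregate_step q)"
  shows "sum q' {1..n} = sum q {1..n}"
proof -
  obtain a b where ab: "q' = q(fst (ch q) := a, snd (ch q) := b)"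
    "a + b = q (fst (ch q)) + q (snd (ch q))"
    using aggregate_step_outcome[OF assms] by metis
  have "fst (ch q) \<in> {1..n}" "snd (ch q) \<in> {1..n}"
    using chosen_pair(1,2)[OF assms(1)] unfolding frac_def by blast+
  then show ?thesis
    unfolding ab(1) sum_fun_upd2[OF finite_atLeastAtMost chosen_pair(3)[OF assms(1)]]
    using ab(2) by simp
qed

lemma aggregate_step_card_frac_less:
  assumes "2 \<le> card (frac n q)" "q' \<in> set_pmf (aggregate_step q)"
  shows "card (frac n q') < card (frac n q)"
proof -
  obtain a b where ab: "q' = q(fst (ch q) := a, snd (ch q) := b)" "a \<in> {0, 1} \<or> b \<in> {0, 1}"
    using aggregate_step_outcome[OF assms] by metis
  have "frac n q' \<subseteq> frac n q"
  proof
    fix k assume k: "k \<in> frac n q'"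
    show "k \<in> frac n q"
    proof (cases "k \<in> {fst (ch q), snd (ch q)}")
      case True
      then show ?thesis using chosen_pair(1,2)[OF assms(1)] by blast
    next
      case False
      then have "q' k = q k" unfolding ab(1) by simp
      then show ?thesis using k unfolding frac_def by simp
    qed
  qed
  moreover obtain c where "c \<in> {fst (ch q), snd (ch q)}" "q' c \<in> {0, 1}"
    using ab chosen_pair(3)[OF assms(1)] by force
  then have "c \<in> frac n q" "c \<notin> frac n q'"
    using chosen_pair(1,2)[OF assms(1)] unfolding frac_def by auto
  moreover have "finite (frac n q)" unfolding frac_def by simp
  ultimately show ?thesis by (metis psubset_card_mono psubsetI)
qed

lemma hs_run_card_frac_le_1:
  "card (frac n q) \<le> Suc k \<Longrightarrow> q' \<in> set_pmf (hs_run ch n k q) \<Longrightarrow> card (frac n q') \<le> 1"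
proof (induction k arbitrary: q)
  case (Suc k)
  show ?case
  proof (cases "card (frac n q) < 2")
    case False
    then obtain q1 where q1: "q1 \<in> set_pmf (aggregate_step q)" "q' \<in> set_pmf (hs_run ch n k q1)"
      using Suc.prems(2) by (auto simp: set_bind_pmf)
    have "card (frac n q1) \<le> Suc k"
      using aggregate_step_card_frac_less[OF _ q1(1)] False Suc.prems(1) by simp
    then show ?thesis using Suc.IH q1(2) by blast
  qed (use Suc.prems in simp)
qed simp

lemma subtree_sum_crossing:
  assumes unit: "in_unit_cube n q" and c2: "2 \<le> card (frac n q)" and v: "v \<in> V"
    and ij: "{i, j} = {fst (ch q), snd (ch q)}" "i \<in> subtree v" "j \<notin> subtree v"
    and a: "0 \<le> a" "a \<le> 1"
    and bound: "in_rounding_interval P (sum q (subtree v))"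
  shows "in_rounding_interval P (sum (q(i := a, j := b)) (subtree v))"
proof -
  have R: "subtree v \<subseteq> {1..n}" "finite (subtree v)" unfolding subtree_keys_def by auto
  have isolated: "frac n q \<inter> subtree v = {i}" by (rule crossing_pair_isolated[OF c2 v ij])
  then have "0 < q i" "q i < 1" unfolding frac_def by auto
  have "i \<noteq> j" using ij(2,3) by blast
  have rest: "sum q (subtree v - {i}) \<in> \<int>"
    using isolated R(1) by (intro sum_in_Ints_no_frac[OF unit]) auto
  have old: "sum q (subtree v) = sum q (subtree v - {i}) + q i"
    using sum.remove[OF R(2) ij(2), where g = q] by simp
  have "sum (q(i := a, j := b)) (subtree v) = sum q (subtree v) + (a - q i)"
    by (simp only: sum_fun_upd2[OF R(2) \<open>i \<noteq> j\<close>]) (use ij(2,3) in simp)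
  then have "sum (q(i := a, j := b)) (subtree v) = sum q (subtree v - {i}) + a"
    unfolding old by simp
  moreover note old
  ultimately show ?thesis
    using in_rounding_interval_replace_frac[OF rest \<open>0 < q i\<close> \<open>q i < 1\<close> _ a] bound by simp
qed

lemma aggregate_step_subtree_sum:
  assumes unit: "in_unit_cube n q" and c2: "2 \<le> card (frac n q)"
    and q': "q' \<in> set_pmf (aggregate_step q)" and v: "v \<in> V"
    and bound: "in_rounding_interval P (sum q (subtree v))"
  shows "in_rounding_interval P (sum q' (subtree v))"
proof -
  obtain a b where ab: "q' = q(fst (ch q) := a, snd (ch q) := b)"
    "a + b = q (fst (ch q)) + q (snd (ch q))" "0 \<le> a" "a \<le> 1" "0 \<le> b" "b \<le> 1"
    using aggregate_step_outcome[OF c2 q'] by metis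
  have ne: "fst (ch q) \<noteq> snd (ch q)" by (rule chosen_pair(3)[OF c2])
  consider "(fst (ch q) \<in> subtree v) = (snd (ch q) \<in> subtree v)"
    | "fst (ch q) \<in> subtree v" "snd (ch q) \<notin> subtree v"
    | "snd (ch q) \<in> subtree v" "fst (ch q) \<notin> subtree v"
    by blast
  then show ?thesis
  proof cases
    case 1
    have "finite (subtree v)" unfolding subtree_keys_def by simp
    then have "sum q' (subtree v) = sum q (subtree v)"
      unfolding ab(1) by (simp only: sum_fun_upd2[OF _ ne]) (use 1 ab(2) in auto)
    then show ?thesis using bound by simp
  next
    case 2
    then show ?thesis
      unfolding ab(1) using subtree_sum_crossing[OF unit c2 v _ 2 ab(3,4) bound] by blast
  next
    case 3
    have "q' = q(snd (ch q) := b, fst (ch q) := a)" unfolding ab(1) using ne by (rule fun_upd_twist)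
    then show ?thesis
      using subtree_sum_crossing[OF unit c2 v _ 3 ab(5,6) bound] by (simp add: insert_commute)
  qed
qed

lemma aggregate_step_expectation_le:
  assumes "in_unit_cube n q" "2 \<le> card (frac n q)" "J \<subseteq> {1..n}"
  shows "measure_pmf.expectation (aggregate_step q) (\<lambda>q'. \<Prod>k\<in>J. lit_prob b (q' k))
    \<le> (\<Prod>k\<in>J. lit_prob b (q k))"
  using chosen_pair(1-3)[OF assms(2)] assms(1,3) finite_subset[OF assms(3)]
  by (intro pair_aggregate_expectation_le) (auto simp: frac_def in_unit_cube_def)

definition summary_invariant :: "(nat \<Rightarrow> real) \<Rightarrow> (nat \<Rightarrow> real) \<Rightarrow> bool" where
  "summary_invariant p q \<longleftrightarrow> in_unit_cube n q \<and> sum q {1..n} = sum p {1..n} \<and>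
    (\<forall>v\<in>V. in_rounding_interval (sum p (subtree v)) (sum q (subtree v)))"

lemma hs_run_summary_invariant:
  assumes "in_unit_cube n p" "q \<in> set_pmf (hs_run ch n k p)"
  shows "summary_invariant p q"
proof (rule hs_run_invariant[where P = "summary_invariant p", OF _ _ assms(2)])
  show "summary_invariant p p"
    using assms(1) in_rounding_interval_self unfolding summary_invariant_def by blast
  fix q q' assume "summary_invariant p q" "2 \<le> card (frac n q)" "q' \<in> set_pmf (aggregate_step q)"
  then show "summary_invariant p q'"
    unfolding summary_invariant_def
    using aggregate_step_in_unit_cube aggregate_step_sum aggregate_step_subtree_sum by metis
qed

lemma hs_run_integral:
  assumes unit: "in_unit_cube n p" and int: "sum p {1..n} \<in> \<int>"
    and q: "q \<in> set_pmf (hs_run ch n n p)"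
  shows "\<forall>k\<in>{1..n}. q k = 0 \<or> q k = 1"
proof -
  have inv: "summary_invariant p q" by (rule hs_run_summary_invariant[OF unit q])
  then have unit_q: "in_unit_cube n q" unfolding summary_invariant_def by blast
  have "card (frac n p) \<le> card {1..n}" by (rule card_mono) (auto simp: frac_def)
  then have "card (frac n p) \<le> Suc n" by simp
  then have le1: "card (frac n q) \<le> 1" using hs_run_card_frac_le_1 q by blast
  have "frac n q = {}"
  proof
    show "frac n q \<subseteq> {}"
    proof
      fix c assume c: "c \<in> frac n q"
      then have "frac n q = {c}"
        using le1 card_le_Suc0_iff_eq[of "frac n q"] by (auto simp: frac_def)
      moreover have c_key: "c \<in> {1..n}" and "0 < q c" "q c < 1" using c unfolding frac_def by auto
      ultimately have "sum q ({1..n} - {c}) \<in> \<int>"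
        by (intro sum_in_Ints_no_frac[OF unit_q]) auto
      moreover have "sum q {1..n} = q c + sum q ({1..n} - {c})"
        using sum.remove[OF _ c_key] by simp
      ultimately have "q c \<in> \<int>"
        using int inv unfolding summary_invariant_def by (metis Ints_diff add_diff_cancel_right')
      then show "c \<in> {}" using \<open>0 < q c\<close> \<open>q c < 1\<close> by (auto elim: Ints_cases)
    qed
  qed simp
  then show ?thesis using in_unit_cube_not_frac[OF unit_q] by blast
qed

lemma hier_summarize_outcome:
  assumes "in_unit_cube n p" "sum p {1..n} \<in> \<int>" "S \<in> set_pmf (hier_summarize ch n p)"
  obtains q where "summary_invariant p q" "\<And>A. A \<subseteq> {1..n} \<Longrightarrow> real (card (S \<inter> A)) = sum q A"
proof -
  obtain q where q: "q \<in> set_pmf (hs_run ch n n p)" "S = {k\<in>{1..n}. q k = 1}"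
    using assms(3) unfolding hier_summarize_def by auto
  have int: "\<forall>k\<in>{1..n}. q k = 0 \<or> q k = 1" by (rule hs_run_integral[OF assms(1,2) q(1)])
  have "real (card (S \<inter> A)) = sum q A" if A: "A \<subseteq> {1..n}" for A
  proof -
    have "S \<inter> A = {k\<in>A. q k = 1}" using q(2) A by auto
    then show ?thesis using int A finite_subset[OF A] by (simp add: sum_01_eq_card subset_iff)
  qed
  then show ?thesis using that hs_run_summary_invariant[OF assms(1) q(1)] by blast
qed

lemma hier_summarize_prob_le:
  assumes unit: "in_unit_cube n p" and int: "sum p {1..n} \<in> \<int>" and J: "J \<subseteq> {1..n}"
  shows "measure_pmf.prob (hier_summarize ch n p) {S. \<forall>k\<in>J. (k \<in> S) = b}
    \<le> (\<Prod>k\<in>J. lit_prob b (p k))"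
proof -
  define M where "M = hs_run ch n n p"
  define E where "E = {q :: nat \<Rightarrow> real. \<forall>k\<in>J. (q k = 1) = b}"
  have "(\<lambda>q. {k\<in>{1..n}. q k = 1}) -` {S. \<forall>k\<in>J. (k \<in> S) = b} = E"
    using J unfolding E_def by (fastforce simp: subset_iff)
  then have "measure_pmf.prob (hier_summarize ch n p) {S. \<forall>k\<in>J. (k \<in> S) = b} = measure_pmf.prob M E"
    unfolding hier_summarize_def M_def by simp
  also have "\<dots> = measure_pmf.expectation M (indicator E)" by simp
  also have "\<dots> = measure_pmf.expectation M (\<lambda>q. \<Prod>k\<in>J. lit_prob b (q k))"
  proof (rule integral_cong_AE)
    have "indicator E q = (\<Prod>k\<in>J. lit_prob b (q k))" if "q \<in> set_pmf M" for q
      using hs_run_integral[OF unit int that[unfolded M_def]] J finite_subset[OF J]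
      by (subst prod_lit_prob_01) (auto simp: E_def)
    then show "AE q in M. indicator E q = (\<Prod>k\<in>J. lit_prob b (q k))"
      by (simp add: AE_measure_pmf_iff)
  qed simp_all
  also have "\<dots> \<le> (\<Prod>k\<in>J. lit_prob b (p k))"
    unfolding M_def
    by (rule hs_run_expectation_le[where P = "in_unit_cube n"])
       (use aggregate_step_in_unit_cube aggregate_step_expectation_le[OF _ _ J] unit in auto)
  finally show ?thesis .
qed

lemma hier_summarize_varopt:
  assumes unit: "in_unit_cube n p" and int: "sum p {1..n} \<in> \<int>"
  shows "varopt n p (hier_summarize ch n p)"
proof -
  let ?D = "hier_summarize ch n p"
  have incl: "measure_pmf.prob ?D {S. J \<subseteq> S} \<le> (\<Prod>i\<in>J. p i)"
    and excl: "measure_pmf.prob ?D {S. J \<inter> S = {}} \<le> (\<Prod>i\<in>J. 1 - p i)"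
    if "J \<subseteq> {1..n}" for J
    using hier_summarize_prob_le[OF unit int that, of True]
      hier_summarize_prob_le[OF unit int that, of False]
    by (simp_all add: lit_prob_def subset_iff disjoint_iff Ball_def)
  have marginal: "measure_pmf.prob ?D {S. i \<in> S} = p i" if "i \<in> {1..n}" for i
  proof -
    have "measure_pmf.prob ?D {S. i \<in> S} \<le> p i" using incl[of "{i}"] that by simp
    moreover have "1 - measure_pmf.prob ?D {S. i \<in> S} \<le> 1 - p i"
      using excl[of "{i}"] that measure_pmf.prob_compl[of "{S. i \<in> S}" ?D]
      by (simp add: Compl_eq_Diff_UNIV[symmetric] Collect_neg_eq[symmetric])
    ultimately show ?thesis by linarith
  qed
  have size: "real (card S) = sum p {1..n}" if S: "S \<in> set_pmf ?D" for S
  proof -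
    obtain q where "summary_invariant p q"
      and "\<And>A. A \<subseteq> {1..n} \<Longrightarrow> real (card (S \<inter> A)) = sum q A"
      using hier_summarize_outcome[OF unit int S] by metis
    moreover have "S \<subseteq> {1..n}" using S unfolding hier_summarize_def by auto
    ultimately show ?thesis unfolding summary_invariant_def by (metis Int_absorb2 order_refl)
  qed
  show ?thesis unfolding varopt_def by (intro conjI ballI allI impI marginal size incl excl)
qed

lemma hier_summarize_subtree_card:
  assumes "in_unit_cube n p" "sum p {1..n} \<in> \<int>" "S \<in> set_pmf (hier_summarize ch n p)" "v \<in> V"
  shows "in_rounding_interval (sum p (subtree v)) (real (card (S \<inter> subtree v)))"
proof -
  obtain q where "summary_invariant p q"
    and card: "\<And>A. A \<subseteq> {1..n} \<Longrightarrow> real (card (S \<inter> A)) = sum q A"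
    using hier_summarize_outcome[OF assms(1-3)] by metis
  moreover have "subtree v \<subseteq> {1..n}" unfolding subtree_keys_def by auto
  ultimately show ?thesis using assms(4) unfolding summary_invariant_def by simp
qed

end

theorem mainTheorem2:
  fixes V :: "'v set" and r :: 'v and par :: "'v \<Rightarrow> 'v"
    and n :: nat and lf :: "nat \<Rightarrow> 'v" and p :: "nat \<Rightarrow> real"
    and ch :: "(nat \<Rightarrow> real) \<Rightarrow> nat \<times> nat"
  assumes tree: "rooted_tree V r par"
    and leaves: "bij_betw lf {1..n} (tree_leaves V r par)"
    and p_range: "\<forall>i\<in>{1..n}. 0 \<le> p i \<and> p i \<le> 1"
    and p_int: "(\<Sum>i\<in>{1..n}. p i) \<in> \<int>"
    and choice: "valid_choice V par lf n ch"
  shows "varopt n p (hier_summarize ch n p)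
    \<and> (\<forall>v\<in>V. \<forall>S\<in>set_pmf (hier_summarize ch n p).
          int (card (S \<inter> subtree_keys par lf n v)) = \<lfloor>\<Sum>i\<in>subtree_keys par lf n v. p i\<rfloor>
        \<or> int (card (S \<inter> subtree_keys par lf n v)) = \<lceil>\<Sum>i\<in>subtree_keys par lf n v. p i\<rceil>)
    \<and> (\<forall>v\<in>V. \<forall>S\<in>set_pmf (hier_summarize ch n p).
          \<bar>real (card (S \<inter> subtree_keys par lf n v)) - (\<Sum>i\<in>subtree_keys par lf n v. p i)\<bar> < 1)"
proof -
  have "lf i \<in> V" if "i \<in> {1..n}" for i
    using bij_betw_apply[OF leaves that] unfolding tree_leaves_def by blast
  then interpret hier_summary V r par n lf ch
    using tree choice by unfold_locales
  have unit: "in_unit_cube n p" using p_range unfolding in_unit_cube_def by blast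
  show ?thesis
    using hier_summarize_varopt[OF unit p_int]
      in_rounding_interval_nat[OF hier_summarize_subtree_card[OF unit p_int]]
    by blast
qed

end
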